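(* Let $d\ge2$, $n\ge3$, and let ancillae $A_1,\dots,A_n$ consecutively measure an unprepared quantum system $Q$ (purified by a reference $R$), so that the joint pure state is $$|\Psi'\rangle=\frac{1}{\sqrt d}\sum_{x_1,\dots,x_n}U^{(2)}_{x_1x_2}\cdots U^{(n)}_{x_{n-1}x_n}\,|\widetilde{x}_n\rangle_Q|x_1\rangle_R|x_1\rangle_{A_1}|x_2\rangle_{A_2}\cdots|x_n\rangle_{A_n}.$$ Let $1\le k<m\le n$ with $m-k\ge2$ (three or more consecutive ancillae). Then the reduced density matrix of $A_k,A_{k+1},\dots,A_m$ (obtained by tracing out $Q$, $R$ and all other ancillae) is a classical-quantum state of the form $$\rho(A_k\cdots A_m)=\frac1d\sum_{x_k,x_m}p_{x_kx_m}\,|x_k\rangle\langle x_k|\otimes|\phi_{x_kx_m}\rangle\langle\phi_{x_kx_m}|\otimes|x_m\rangle\langle x_m|,$$ with $p_{x_kx_m}=\sum_{x_{k+1},\dots,x_{m-1}}|U^{(k+1)}_{x_kx_{k+1}}|^2\cdots|U^{(m)}_{x_{m-1}x_m}|^2$ and $|\phi_{x_kx_m}\rangle$ normalized pure states of $A_{k+1}\cdots A_{m-1}$, and its joint entropy is contained only in the first and last devices of the block: $$S(A_k A_{k+1}\cdots A_{m-1}A_m)=S(A_kA_m).$$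
   Context: $Q$ is a $d$-dimensional system that is "unprepared": it is in the maximally mixed state, purified by a reference system $R$ as $|QR\rangle=d^{-1/2}\sum_{x}|\widetilde{x}\rangle|x\rangle$. For each $i$ an orthonormal basis $\{|\widetilde{x}_i\rangle\}_{x_i=1}^d$ of $Q$ is the basis measured by ancilla $A_i$, with $U^{(i)}_{x_{i-1}x_i}=\langle\widetilde{x}_i|\widetilde{x}_{i-1}\rangle$ ($i\ge2$) the entries of a unitary $d\times d$ matrix. Each ancilla $A_i$ is $d$-dimensional with orthonormal basis $\{|x\rangle\}$, starts in a fixed state $|0\rangle$, and measures $Q$ by the unitary $\sum_x|\widetilde{x}_i\rangle\langle\widetilde{x}_i|\otimes U_x$ with $U_x|0\rangle=|x\rangle$, in the order $A_1,A_2,\dots$; writing $R$ in the basis adapted to $A_1$ gives the displayed state. $S$ denotes von Neumann entropy with logarithm base $d$. *)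

theory Defs
  imports Complex_Main "HOL-Library.FuncSet"
begin

(* Computational-basis indices run over 0..d-1. A basis configuration of a set K of
ancillae (labelled 1..n) is an extensional function in K ->E {..<d}.
U i x y (for 2 <= i <= n, x,y < d) is the matrix entry U^(i)_{x y}. *)

definition unitary_mat :: "nat \<Rightarrow> (nat \<Rightarrow> nat \<Rightarrow> complex) \<Rightarrow> bool" where
  "unitary_mat d M \<longleftrightarrow>
     (\<forall>x<d. \<forall>z<d. (\<Sum>y<d. M x y * cnj (M z y)) = (if x = z then 1 else 0)) \<and>
     (\<forall>x<d. \<forall>z<d. (\<Sum>y<d. cnj (M y x) * M y z) = (if x = z then 1 else 0))"

(* Amplitude of the joint pure state |Psi'> on Q (index q, in the basis |x~_n>),
R (index r) and ancillae A_1..A_n (configuration x). *)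
definition amp :: "nat \<Rightarrow> nat \<Rightarrow> (nat \<Rightarrow> nat \<Rightarrow> nat \<Rightarrow> complex) \<Rightarrow> nat \<Rightarrow> nat \<Rightarrow> (nat \<Rightarrow> nat) \<Rightarrow> complex" where
  "amp d n U q r x =
     (if q = x n \<and> r = x 1
      then complex_of_real (1 / sqrt (real d)) * (\<Prod>i\<in>{2..n}. U i (x (i - 1)) (x i))
      else 0)"

definition reduced :: "nat \<Rightarrow> nat \<Rightarrow> (nat \<Rightarrow> nat \<Rightarrow> nat \<Rightarrow> complex) \<Rightarrow> nat set
    \<Rightarrow> (nat \<Rightarrow> nat) \<Rightarrow> (nat \<Rightarrow> nat) \<Rightarrow> complex" where
  "reduced d n U K a b =
     (\<Sum>q<d. \<Sum>r<d. \<Sum>z\<in>({1..n} - K) \<rightarrow>\<^sub>E {..<d}.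
        amp d n U q r (\<lambda>i. if i \<in> K then a i else z i) *
        cnj (amp d n U q r (\<lambda>i. if i \<in> K then b i else z i)))"

definition ent_term :: "real \<Rightarrow> real \<Rightarrow> real" where
  "ent_term base t = (if t = 0 then 0 else t * log base t)"

definition vn_entropy :: "real \<Rightarrow> 'i set \<Rightarrow> ('i \<Rightarrow> 'i \<Rightarrow> complex) \<Rightarrow> real" where
  "vn_entropy base I rho =
     (THE s. \<exists>(e :: 'i \<Rightarrow> 'i \<Rightarrow> complex) (lam :: 'i \<Rightarrow> real).
        (\<forall>i\<in>I. \<forall>j\<in>I. (\<Sum>x\<in>I. e i x * cnj (e j x)) = (if i = j then 1 else 0)) \<and>
        (\<forall>x\<in>I. \<forall>y\<in>I. rho x y = (\<Sum>i\<in>I. complex_of_real (lam i) * e i x * cnj (e i y))) \<and>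
        s = - (\<Sum>i\<in>I. ent_term base (lam i)))"

end

theory Submission
  imports Defs "HOL-Computational_Algebra.Polynomial"
begin

text \<open>Tracing out \<open>Q\<close>, \<open>R\<close> and the ancillae before \<open>A\<^sub>k\<close> and after \<open>A\<^sub>m\<close> telescopes by
  unitarity: each such sum contracts a column or a row of some \<open>U\<^sup>(\<^sup>i\<^sup>)\<close> and leaves a Kronecker
  delta in the outer indices \<open>x\<^sub>k\<close>, \<open>x\<^sub>m\<close>. Hence \<open>\<rho>(A\<^sub>k\<cdots>A\<^sub>m)\<close> is block diagonal in \<open>(x\<^sub>k, x\<^sub>m)\<close>, the
  block being \<open>p/d\<close> times the projector onto \<open>|\<phi>\<rangle>\<close>, while \<open>\<rho>(A\<^sub>kA\<^sub>m)\<close> is diagonal with the same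
  weights \<open>p/d\<close>. Completing each \<open>|\<phi>\<rangle>\<close> to an orthonormal basis shows that both operators have the
  nonzero spectrum \<open>{p/d}\<close>, and the entropy does not depend on the chosen spectral decomposition
  because the spectrum is determined by the traces of the powers of the operator.\<close>

section \<open>Sums over finite function spaces\<close>

lemma bij_betw_override_on_PiE:
  assumes "A \<inter> B = {}"
  shows "bij_betw (\<lambda>p. override_on (snd p) (fst p) A) (Pi\<^sub>E A T \<times> Pi\<^sub>E B T) (Pi\<^sub>E (A \<union> B) T)"
  by (rule bij_betw_byWitness[where f' = "\<lambda>z. (restrict z A, restrict z B)"])
    (use assms in \<open>auto simp: override_on_def PiE_def extensional_def fun_eq_iff\<close>)

lemma PiE_doubleton_eq_iff:
  assumes "f \<in> {k, m} \<rightarrow>\<^sub>E A" "g \<in> {k, m} \<rightarrow>\<^sub>E A"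
  shows "f = g \<longleftrightarrow> f k = g k \<and> f m = g m"
  using PiE_ext[OF assms] by blast

lemma sum_PiE_Un:
  assumes "A \<inter> B = {}"
  shows "(\<Sum>z\<in>Pi\<^sub>E (A \<union> B) T. f z) = (\<Sum>x\<in>Pi\<^sub>E A T. \<Sum>y\<in>Pi\<^sub>E B T. f (override_on y x A))"
  by (simp add: sum.reindex_bij_betw[OF bij_betw_override_on_PiE[OF assms], symmetric]
      sum.cartesian_product case_prod_beta)

lemma sum_PiE_insert:
  assumes "x \<notin> S"
  shows "(\<Sum>z\<in>Pi\<^sub>E (insert x S) T. f z) = (\<Sum>c\<in>T x. \<Sum>l\<in>Pi\<^sub>E S T. f (l(x := c)))"
proof -
  have "(\<Sum>z\<in>Pi\<^sub>E (insert x S) T. f z) = (\<Sum>(c, l)\<in>T x \<times> Pi\<^sub>E S T. f (l(x := c)))"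
    unfolding PiE_insert_eq by (subst sum.reindex[OF inj_combinator[OF assms]]) (simp add: case_prod_beta)
  then show ?thesis
    by (simp add: sum.cartesian_product)
qed

lemma sum_PiE_Un_mult:
  fixes f g :: "('a \<Rightarrow> 'b) \<Rightarrow> 'c :: comm_semiring_1"
  assumes "A \<inter> B = {}"
  shows "(\<Sum>z\<in>Pi\<^sub>E (A \<union> B) T. f (restrict z A) * g (restrict z B)) = (\<Sum>x\<in>Pi\<^sub>E A T. f x) * (\<Sum>y\<in>Pi\<^sub>E B T. g y)"
proof -
  have "restrict (override_on y x A) A = x" "restrict (override_on y x A) B = y"
    if "x \<in> Pi\<^sub>E A T" "y \<in> Pi\<^sub>E B T" for x y
    using that assms by (auto simp: override_on_def PiE_def extensional_def fun_eq_iff)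
  then show ?thesis
    by (simp add: sum_PiE_Un[OF assms] sum_product)
qed

section \<open>Spectral decompositions and von Neumann entropy\<close>

definition orthonormal_basis :: "'i set \<Rightarrow> ('i \<Rightarrow> 'i \<Rightarrow> complex) \<Rightarrow> bool" where
  "orthonormal_basis I e \<longleftrightarrow> (\<forall>i\<in>I. \<forall>j\<in>I. (\<Sum>x\<in>I. e i x * cnj (e j x)) = (if i = j then 1 else 0))"

definition spectral_decomp :: "'i set \<Rightarrow> ('i \<Rightarrow> 'i \<Rightarrow> complex) \<Rightarrow> ('i \<Rightarrow> 'i \<Rightarrow> complex) \<Rightarrow> ('i \<Rightarrow> real) \<Rightarrow> bool" where
  "spectral_decomp I rho e lam \<longleftrightarrow> orthonormal_basis I e \<and>
     (\<forall>x\<in>I. \<forall>y\<in>I. rho x y = (\<Sum>i\<in>I. of_real (lam i) * e i x * cnj (e i y)))"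

text \<open>\<open>mpow I rho p\<close> is \<open>rho\<close> to the power \<open>p + 1\<close>.\<close>

primrec mpow :: "'i set \<Rightarrow> ('i \<Rightarrow> 'i \<Rightarrow> complex) \<Rightarrow> nat \<Rightarrow> 'i \<Rightarrow> 'i \<Rightarrow> complex" where
  "mpow I rho 0 = rho"
| "mpow I rho (Suc p) = (\<lambda>x y. \<Sum>z\<in>I. mpow I rho p x z * rho z y)"

lemma spectral_decomp_mpow:
  assumes "spectral_decomp I rho e lam" "finite I" "x \<in> I" "y \<in> I"
  shows "mpow I rho p x y = (\<Sum>i\<in>I. of_real (lam i ^ Suc p) * e i x * cnj (e i y))"
  using assms(4)
proof (induction p arbitrary: y)
  case 0
  then show ?case
    using assms(1,3) unfolding spectral_decomp_def by simp
next
  case (Suc p)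
  have orth: "(\<Sum>z\<in>I. e j z * cnj (e i z)) = (if j = i then 1 else 0)" if "i \<in> I" "j \<in> I" for i j
    using assms(1) that unfolding spectral_decomp_def orthonormal_basis_def by blast
  have rho: "rho z y = (\<Sum>j\<in>I. of_real (lam j) * e j z * cnj (e j y))" if "z \<in> I" for z
    using assms(1) Suc.prems that unfolding spectral_decomp_def by blast
  define c where "c i j = of_real (lam i ^ Suc p) * e i x * of_real (lam j) * cnj (e j y)" for i j
  have "mpow I rho (Suc p) x y = (\<Sum>z\<in>I. (\<Sum>i\<in>I. of_real (lam i ^ Suc p) * e i x * cnj (e i z)) *
        (\<Sum>j\<in>I. of_real (lam j) * e j z * cnj (e j y)))"
    using Suc.IH rho by simp
  also have "\<dots> = (\<Sum>z\<in>I. \<Sum>i\<in>I. \<Sum>j\<in>I. c i j * (e j z * cnj (e i z)))"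
    unfolding c_def sum_product by (intro sum.cong refl) (simp only: mult_ac)
  also have "\<dots> = (\<Sum>i\<in>I. \<Sum>j\<in>I. c i j * (\<Sum>z\<in>I. e j z * cnj (e i z)))"
    by (subst sum.swap, rule sum.cong[OF refl], subst sum.swap) (simp add: sum_distrib_left)
  also have "\<dots> = (\<Sum>i\<in>I. \<Sum>j\<in>I. if j = i then c i j else 0)"
    by (intro sum.cong refl) (simp add: orth)
  also have "\<dots> = (\<Sum>i\<in>I. c i i)"
    using assms(2) by simp
  also have "\<dots> = (\<Sum>i\<in>I. of_real (lam i ^ Suc (Suc p)) * e i x * cnj (e i y))"
    unfolding c_def by (simp add: ac_simps)
  finally show ?case .
qed

lemma spectral_decomp_power_sum:
  assumes "spectral_decomp I rho e lam" "finite I"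
  shows "of_real (\<Sum>i\<in>I. lam i ^ Suc p) = (\<Sum>x\<in>I. mpow I rho p x x)"
proof -
  have norm: "(\<Sum>x\<in>I. e i x * cnj (e i x)) = 1" if "i \<in> I" for i
    using assms(1) that unfolding spectral_decomp_def orthonormal_basis_def by simp
  have "(\<Sum>x\<in>I. mpow I rho p x x) = (\<Sum>x\<in>I. \<Sum>i\<in>I. of_real (lam i ^ Suc p) * (e i x * cnj (e i x)))"
    using spectral_decomp_mpow[OF assms] by (simp add: ac_simps)
  also have "\<dots> = (\<Sum>i\<in>I. of_real (lam i ^ Suc p) * (\<Sum>x\<in>I. e i x * cnj (e i x)))"
    by (subst sum.swap) (simp only: sum_distrib_left)
  also have "\<dots> = of_real (\<Sum>i\<in>I. lam i ^ Suc p)"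
    by (simp add: norm)
  finally show ?thesis by simp
qed

lemma interpolating_poly_exists:
  fixes g :: "'a :: field \<Rightarrow> 'a"
  assumes "finite V"
  shows "\<exists>P. \<forall>v\<in>V. poly P v = g v"
  using assms
proof (induction V rule: finite_induct)
  case empty
  then show ?case by simp
next
  case (insert x V)
  then obtain P where P: "\<forall>v\<in>V. poly P v = g v"
    by blast
  define Q where "Q = (\<Prod>w\<in>V. [:- w, 1:])"
  have Q: "poly Q y = (\<Prod>w\<in>V. y - w)" for y
    unfolding Q_def by (simp add: poly_prod)
  have "poly Q x \<noteq> 0" "\<forall>v\<in>V. poly Q v = 0"
    unfolding Q using insert by auto
  then have "\<forall>v\<in>insert x V. poly (P + smult ((g x - poly P x) / poly Q x) Q) v = g v"
    using P by auto
  then show ?case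
    by blast
qed

text \<open>The eigenvalues are determined by the traces of the powers of \<open>rho\<close>, and on the finitely
  many eigenvalues every function agrees with a polynomial.\<close>

lemma spectral_decomp_sum_unique:
  fixes f :: "real \<Rightarrow> real"
  assumes "spectral_decomp I rho e lam" "spectral_decomp I rho e' mu" "finite I"
  shows "(\<Sum>i\<in>I. f (lam i)) = (\<Sum>i\<in>I. f (mu i))"
proof -
  have powers: "(\<Sum>i\<in>I. lam i ^ j) = (\<Sum>i\<in>I. mu i ^ j)" for j
  proof (cases j)
    case (Suc p)
    have "of_real (\<Sum>i\<in>I. lam i ^ Suc p) = (of_real (\<Sum>i\<in>I. mu i ^ Suc p) :: complex)"
      using spectral_decomp_power_sum[OF assms(1,3)] spectral_decomp_power_sum[OF assms(2,3)] by simp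
    then show ?thesis
      using Suc of_real_eq_iff by blast
  qed simp
  obtain P where P: "\<forall>v\<in>lam ` I \<union> mu ` I. poly P v = f v"
    using interpolating_poly_exists[of "lam ` I \<union> mu ` I" f] assms(3) by blast
  have via_P: "(\<Sum>i\<in>I. f (g i)) = (\<Sum>j\<le>degree P. coeff P j * (\<Sum>i\<in>I. g i ^ j))"
    if "\<forall>i\<in>I. poly P (g i) = f (g i)" for g
  proof -
    have "(\<Sum>i\<in>I. f (g i)) = (\<Sum>i\<in>I. \<Sum>j\<le>degree P. coeff P j * g i ^ j)"
      using that by (simp add: poly_altdef)
    then show ?thesis
      by (subst (asm) sum.swap) (simp add: sum_distrib_left)
  qed
  show ?thesis
    using via_P[of lam] via_P[of mu] P powers by auto
qed

lemma vn_entropy_eqI: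
  assumes "spectral_decomp I rho e lam" "finite I"
  shows "vn_entropy base I rho = - (\<Sum>i\<in>I. ent_term base (lam i))"
  unfolding vn_entropy_def
proof (rule the_equality)
  show "\<exists>e lam'. (\<forall>i\<in>I. \<forall>j\<in>I. (\<Sum>x\<in>I. e i x * cnj (e j x)) = (if i = j then 1 else 0)) \<and>
        (\<forall>x\<in>I. \<forall>y\<in>I. rho x y = (\<Sum>i\<in>I. of_real (lam' i) * e i x * cnj (e i y))) \<and>
        - (\<Sum>i\<in>I. ent_term base (lam i)) = - (\<Sum>i\<in>I. ent_term base (lam' i))"
    using assms(1) unfolding spectral_decomp_def orthonormal_basis_def by blast
next
  fix s assume "\<exists>e' mu. (\<forall>i\<in>I. \<forall>j\<in>I. (\<Sum>x\<in>I. e' i x * cnj (e' j x)) = (if i = j then 1 else 0)) \<and>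
        (\<forall>x\<in>I. \<forall>y\<in>I. rho x y = (\<Sum>i\<in>I. of_real (mu i) * e' i x * cnj (e' i y))) \<and>
        s = - (\<Sum>i\<in>I. ent_term base (mu i))"
  then obtain e' mu where "spectral_decomp I rho e' mu" "s = - (\<Sum>i\<in>I. ent_term base (mu i))"
    unfolding spectral_decomp_def orthonormal_basis_def by blast
  then show "s = - (\<Sum>i\<in>I. ent_term base (lam i))"
    using spectral_decomp_sum_unique[OF assms(1) _ assms(2)] by simp
qed

lemma vn_entropy_diagonal:
  assumes "finite I" "\<forall>x\<in>I. \<forall>y\<in>I. rho x y = (if x = y then of_real (f x) else 0)"
  shows "vn_entropy base I rho = - (\<Sum>x\<in>I. ent_term base (f x))"
proof (rule vn_entropy_eqI[OF _ assms(1)])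
  have "of_real (f i) * (if i = x then 1 else 0) * cnj (if i = y then 1 else 0) =
      (if i = x then if x = y then of_real (f x) else 0 else 0)"
    "(if i = x then 1 else 0) * cnj (if y = x then 1 else 0) = (if x = i then if i = y then 1 else 0 else 0)"
    for i x y :: 'a
    by auto
  then show "spectral_decomp I rho (\<lambda>i x. if i = x then 1 else 0) f"
    unfolding spectral_decomp_def orthonormal_basis_def using assms by simp
qed

lemma spectral_decomp_reindex:
  assumes h: "bij_betw h A I" and dec: "spectral_decomp A rho' e lam"
    and rho: "\<forall>a\<in>A. \<forall>b\<in>A. rho (h a) (h b) = rho' a b"
  shows "spectral_decomp I rho (\<lambda>i x. e (inv_into A h i) (inv_into A h x)) (\<lambda>i. lam (inv_into A h i))"
proof -
  let ?g = "inv_into A h"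
  have sum_I: "(\<Sum>x\<in>I. F x) = (\<Sum>a\<in>A. F (h a))" for F :: "_ \<Rightarrow> complex"
    by (rule sum.reindex_bij_betw[OF h, symmetric])
  have g: "?g (h a) = a" if "a \<in> A" for a
    using bij_betw_inv_into_left[OF h that] .
  have hg: "h (?g x) = x" "?g x \<in> A" if "x \<in> I" for x
    using bij_betw_inv_into_right[OF h that] bij_betw_apply[OF bij_betw_inv_into[OF h] that] by auto
  show ?thesis
    unfolding spectral_decomp_def orthonormal_basis_def
  proof (intro conjI ballI)
    fix i j assume "i \<in> I" "j \<in> I"
    then show "(\<Sum>x\<in>I. e (?g i) (?g x) * cnj (e (?g j) (?g x))) = (if i = j then 1 else 0)"
      using dec hg by (auto simp: sum_I g spectral_decomp_def orthonormal_basis_def cong: sum.cong) metis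
  next
    fix x y assume "x \<in> I" "y \<in> I"
    then show "rho x y = (\<Sum>i\<in>I. of_real (lam (?g i)) * e (?g i) (?g x) * cnj (e (?g i) (?g y)))"
      using dec rho hg by (auto simp: sum_I g spectral_decomp_def cong: sum.cong) metis
  qed
qed

lemma householder_orthonormal:
  fixes u :: "'a \<Rightarrow> complex" and c :: real
  assumes "finite W" "c * c * (\<Sum>w\<in>W. (cmod (u w))\<^sup>2) = 2 * c"
  shows "orthonormal_basis W (\<lambda>v w. (if w = v then 1 else 0) - of_real c * u w * cnj (u v))"
  unfolding orthonormal_basis_def
proof (intro ballI)
  fix a b assume ab: "a \<in> W" "b \<in> W"
  define nu where "nu = (\<Sum>w\<in>W. (cmod (u w))\<^sup>2)"
  have nu: "(\<Sum>w\<in>W. u w * cnj (u w)) = of_real nu"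
    unfolding nu_def of_real_sum by (rule sum.cong[OF refl]) (rule complex_norm_square[symmetric])
  have "((if w = a then 1 else 0) - of_real c * u w * cnj (u a)) *
        cnj ((if w = b then 1 else 0) - of_real c * u w * cnj (u b)) =
      (if w = a then (if w = b then 1 else 0) else 0) - (if w = a then of_real c * cnj (u w) * u b else 0)
      - (if w = b then of_real c * u w * cnj (u a) else 0)
      + of_real (c * c) * cnj (u a) * u b * (u w * cnj (u w))" for w
    by (auto simp: algebra_simps)
  then have "(\<Sum>w\<in>W. ((if w = a then 1 else 0) - of_real c * u w * cnj (u a)) *
        cnj ((if w = b then 1 else 0) - of_real c * u w * cnj (u b)))
      = (if a = b then 1 else 0) - of_real c * cnj (u a) * u b - of_real c * u b * cnj (u a)
        + of_real (c * c) * cnj (u a) * u b * of_real nu"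
    using assms(1) ab by (simp add: sum.distrib sum_subtractf sum_distrib_left[symmetric] nu)
  also have "\<dots> = (if a = b then 1 else 0) + (of_real (c * c * nu) - of_real (2 * c)) * cnj (u a) * u b"
    by (simp add: algebra_simps)
  also have "\<dots> = (if a = b then 1 else 0)"
    by (simp only: assms(2)[folded nu_def] diff_self mult_zero_left add_0_right)
  finally show "(\<Sum>w\<in>W. ((if w = a then 1 else 0) - of_real c * u w * cnj (u a)) *
        cnj ((if w = b then 1 else 0) - of_real c * u w * cnj (u b))) = (if a = b then 1 else 0)" .
qed

lemma orthonormal_basis_mult_phase:
  assumes "orthonormal_basis W e" "\<theta> * cnj \<theta> = 1"
  shows "orthonormal_basis W (\<lambda>v w. \<theta> * e v w)"
proof -
  have "(\<Sum>w\<in>W. \<theta> * e a w * cnj (\<theta> * e b w)) = (\<theta> * cnj \<theta>) * (\<Sum>w\<in>W. e a w * cnj (e b w))" for a b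
    by (simp add: sum_distrib_left mult_ac)
  then show ?thesis
    using assms unfolding orthonormal_basis_def by simp
qed

lemma norm_sub_phase_unit_vector:
  fixes \<phi> :: "'a \<Rightarrow> complex"
  assumes W: "finite W" "w0 \<in> W" and unit: "(\<Sum>w\<in>W. (cmod (\<phi> w))\<^sup>2) = 1"
    and \<theta>: "cmod \<theta> = 1" "\<phi> w0 = \<theta> * of_real (cmod (\<phi> w0))"
  shows "(\<Sum>w\<in>W. (cmod (\<phi> w - (if w = w0 then \<theta> else 0)))\<^sup>2) = 2 - 2 * cmod (\<phi> w0)"
proof -
  have diff: "\<phi> w0 - \<theta> = \<theta> * of_real (cmod (\<phi> w0) - 1)"
    using \<theta>(2) by (simp add: algebra_simps)
  have "(cmod (\<phi> w0 - \<theta>))\<^sup>2 = (1 - cmod (\<phi> w0))\<^sup>2"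
    unfolding diff norm_mult \<theta>(1) norm_of_real by (simp add: power2_commute)
  moreover have "(\<Sum>w\<in>W - {w0}. (cmod (\<phi> w - (if w = w0 then \<theta> else 0)))\<^sup>2) = 1 - (cmod (\<phi> w0))\<^sup>2"
    using unit sum.remove[OF W, of "\<lambda>w. (cmod (\<phi> w))\<^sup>2"] by simp
  ultimately show ?thesis
    using sum.remove[OF W, of "\<lambda>w. (cmod (\<phi> w - (if w = w0 then \<theta> else 0)))\<^sup>2"]
    by (simp add: power2_eq_square algebra_simps)
qed

text \<open>The witness is a Householder reflection: with \<open>\<theta>\<close> the phase of \<open>\<phi> w\<^sub>0\<close> and
  \<open>u = \<phi> - \<theta> e\<^sub>w\<^sub>0\<close>, the rows of \<open>\<theta> (1 - c u u\<^sup>*)\<close> with \<open>c = 2 / \<parallel>u\<parallel>\<^sup>2\<close> (or \<open>c = 0\<close> if \<open>u = 0\<close>) are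
  orthonormal, and the \<open>w\<^sub>0\<close>-th one is \<open>\<phi>\<close>.\<close>

lemma orthonormal_basis_extend:
  fixes \<phi> :: "'a \<Rightarrow> complex"
  assumes W: "finite W" "w0 \<in> W" and unit: "(\<Sum>w\<in>W. (cmod (\<phi> w))\<^sup>2) = 1"
  shows "\<exists>f. orthonormal_basis W f \<and> (\<forall>w\<in>W. f w0 w = \<phi> w)"
proof -
  define r where "r = cmod (\<phi> w0)"
  define \<theta> where "\<theta> = (if \<phi> w0 = 0 then 1 else \<phi> w0 / of_real r)"
  have \<theta>: "cmod \<theta> = 1" "\<phi> w0 = \<theta> * of_real r"
    unfolding \<theta>_def r_def by (auto simp: norm_divide)
  then have \<theta>_cnj: "\<theta> * cnj \<theta> = 1"
    by (metis complex_norm_square mult_1 of_real_1 power2_eq_square)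
  define u where "u w = \<phi> w - (if w = w0 then \<theta> else 0)" for w
  have u_norm: "(\<Sum>w\<in>W. (cmod (u w))\<^sup>2) = 2 - 2 * r"
    unfolding u_def r_def using norm_sub_phase_unit_vector[OF W unit] \<theta> unfolding r_def by blast
  define c where "c = (if r = 1 then 0 else 1 / (1 - r))"
  have "c * c * (\<Sum>w\<in>W. (cmod (u w))\<^sup>2) = 2 * c"
  proof (cases "r = 1")
    case False
    then have "c * (1 - r) = 1"
      by (simp add: c_def)
    moreover have "c * c * (2 - 2 * r) = 2 * c * (c * (1 - r))"
      by (simp add: algebra_simps)
    ultimately show ?thesis
      unfolding u_norm by simp
  qed (simp add: c_def)
  define H where "H v w = (if w = v then 1 else 0) - of_real c * u w * cnj (u v)" for v w
  have H: "orthonormal_basis W H"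
    unfolding H_def by (rule householder_orthonormal[OF W(1)]) fact
  have u_scaled: "of_real (c * (1 - r)) * u w = u w" if "w \<in> W" for w
  proof (cases "r = 1")
    case True
    then have "(cmod (u w))\<^sup>2 = 0"
      using u_norm sum_nonneg_eq_0_iff[OF W(1), of "\<lambda>w. (cmod (u w))\<^sup>2"] that by simp
    then show ?thesis
      by simp
  qed (simp add: c_def)
  define f where "f = (\<lambda>v w. \<theta> * H v w)"
  have "orthonormal_basis W f"
    unfolding f_def by (rule orthonormal_basis_mult_phase[OF H \<theta>_cnj])
  moreover have "f w0 w = \<phi> w" if "w \<in> W" for w
  proof -
    have uw0: "u w0 = \<theta> * of_real (r - 1)"
      unfolding u_def using \<theta>(2) by (simp add: algebra_simps)
    have "f w0 w = \<theta> * (if w = w0 then 1 else 0) + of_real (c * (1 - r)) * u w * (\<theta> * cnj \<theta>)"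
      unfolding f_def H_def uw0 by (simp add: algebra_simps)
    also have "\<dots> = \<theta> * (if w = w0 then 1 else 0) + u w"
      by (simp only: \<theta>_cnj mult_1_right u_scaled[OF that])
    also have "\<dots> = \<phi> w"
      by (simp add: u_def)
    finally show ?thesis .
  qed
  ultimately show ?thesis
    by blast
qed

lemma spectral_decomp_cq:
  fixes c :: "'j \<Rightarrow> real" and F :: "'j \<Rightarrow> 'w \<Rightarrow> 'w \<Rightarrow> complex"
  assumes "finite J" "finite W" "w0 \<in> W" "\<forall>j\<in>J. orthonormal_basis W (F j)"
  shows "spectral_decomp (J \<times> W)
     (\<lambda>p q. if fst p = fst q then of_real (c (fst p)) * F (fst p) w0 (snd p) * cnj (F (fst p) w0 (snd q)) else 0)
     (\<lambda>p q. if fst p = fst q then F (fst p) (snd p) (snd q) else 0)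
     (\<lambda>p. if snd p = w0 then c (fst p) else 0)"
proof -
  have sum_JW: "(\<Sum>x\<in>J \<times> W. f x) = (\<Sum>j\<in>J. \<Sum>w\<in>W. f (j, w))" for f :: "_ \<Rightarrow> complex"
    by (simp add: sum.cartesian_product)
  show ?thesis
  unfolding spectral_decomp_def orthonormal_basis_def
  proof (intro conjI ballI)
    fix p q assume p: "p \<in> J \<times> W" and q: "q \<in> J \<times> W"
    have "(\<Sum>w\<in>W. (if fst p = j then F (fst p) (snd p) w else 0) * cnj (if fst q = j then F (fst q) (snd q) w else 0))
      = (if j = fst p then if fst q = fst p then \<Sum>w\<in>W. F (fst p) (snd p) w * cnj (F (fst p) (snd q) w) else 0 else 0)"
      for j
      by auto
    then show "(\<Sum>x\<in>J \<times> W. (if fst p = fst x then F (fst p) (snd p) (snd x) else 0) *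
        cnj (if fst q = fst x then F (fst q) (snd q) (snd x) else 0)) = (if p = q then 1 else 0)"
      using p q assms unfolding orthonormal_basis_def sum_JW by (auto simp: prod_eq_iff cong: if_cong)
  next
    fix p q assume p: "p \<in> J \<times> W" and q: "q \<in> J \<times> W"
    have "(\<Sum>v\<in>W. of_real (if v = w0 then c i else 0) * (if i = fst p then F i v (snd p) else 0) *
           cnj (if i = fst q then F i v (snd q) else 0)) =
        (if i = fst p then if fst p = fst q
         then of_real (c (fst p)) * F (fst p) w0 (snd p) * cnj (F (fst p) w0 (snd q)) else 0 else 0)" for i
      using assms by (auto simp: if_distrib[of "\<lambda>t. t * _"] if_distrib[of of_real] cong: if_cong)
    then show "(if fst p = fst q then of_real (c (fst p)) * F (fst p) w0 (snd p) * cnj (F (fst p) w0 (snd q)) else 0) =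
        (\<Sum>x\<in>J \<times> W. of_real (if snd x = w0 then c (fst x) else 0) *
           (if fst x = fst p then F (fst x) (snd x) (snd p) else 0) *
           cnj (if fst x = fst q then F (fst x) (snd x) (snd q) else 0))"
      using p q assms(1) unfolding sum_JW by (simp add: mem_Times_iff cong: if_cong)
  qed
qed

lemma vn_entropy_cq:
  fixes c :: "'j \<Rightarrow> real" and \<phi> :: "'j \<Rightarrow> 'w \<Rightarrow> complex" and h :: "'j \<times> 'w \<Rightarrow> 'i"
  assumes h: "bij_betw h (J \<times> W) I" and fin: "finite J" "finite W" "W \<noteq> {}"
    and unit: "\<forall>j\<in>J. (\<Sum>w\<in>W. (cmod (\<phi> j w))\<^sup>2) = 1"
    and rho: "\<forall>p\<in>J \<times> W. \<forall>q\<in>J \<times> W. rho (h p) (h q) =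
      (if fst p = fst q then of_real (c (fst p)) * \<phi> (fst p) (snd p) * cnj (\<phi> (fst p) (snd q)) else 0)"
  shows "vn_entropy base I rho = - (\<Sum>j\<in>J. ent_term base (c j))"
proof -
  obtain w0 where w0: "w0 \<in> W"
    using fin(3) by blast
  have "\<forall>j\<in>J. \<exists>f. orthonormal_basis W f \<and> (\<forall>w\<in>W. f w0 w = \<phi> j w)"
    using orthonormal_basis_extend[OF fin(2) w0] unit by blast
  then obtain F where F: "\<forall>j\<in>J. orthonormal_basis W (F j) \<and> (\<forall>w\<in>W. F j w0 w = \<phi> j w)"
    by (rule bchoice[THEN exE])
  define lam where "lam p = (if snd p = w0 then c (fst p) else 0)" for p
  have "spectral_decomp (J \<times> W)
     (\<lambda>p q. if fst p = fst q then of_real (c (fst p)) * F (fst p) w0 (snd p) * cnj (F (fst p) w0 (snd q)) else 0)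
     (\<lambda>p q. if fst p = fst q then F (fst p) (snd p) (snd q) else 0) lam"
    unfolding lam_def by (rule spectral_decomp_cq[OF fin(1,2) w0]) (use F in blast)
  then have "spectral_decomp I rho
      (\<lambda>i x. if fst (inv_into (J \<times> W) h i) = fst (inv_into (J \<times> W) h x)
        then F (fst (inv_into (J \<times> W) h i)) (snd (inv_into (J \<times> W) h i)) (snd (inv_into (J \<times> W) h x)) else 0)
      (\<lambda>i. lam (inv_into (J \<times> W) h i))"
  proof (rule spectral_decomp_reindex[OF h], intro ballI)
    fix p q assume pq: "p \<in> J \<times> W" "q \<in> J \<times> W"
    then have "rho (h p) (h q) =
      (if fst p = fst q then of_real (c (fst p)) * \<phi> (fst p) (snd p) * cnj (\<phi> (fst p) (snd q)) else 0)"
      using rho by blast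
    moreover have "\<phi> (fst p) (snd p) = F (fst p) w0 (snd p)" "\<phi> (fst p) (snd q) = F (fst p) w0 (snd q)"
      using F pq by (auto simp: mem_Times_iff)
    ultimately show "rho (h p) (h q) =
      (if fst p = fst q then of_real (c (fst p)) * F (fst p) w0 (snd p) * cnj (F (fst p) w0 (snd q)) else 0)"
      by (simp only:)
  qed
  then have "vn_entropy base I rho = - (\<Sum>i\<in>I. ent_term base (lam (inv_into (J \<times> W) h i)))"
    by (rule vn_entropy_eqI) (use bij_betw_finite[OF h] fin in auto)
  also have "(\<Sum>i\<in>I. ent_term base (lam (inv_into (J \<times> W) h i))) = (\<Sum>p\<in>J \<times> W. ent_term base (lam p))"
    by (rule sum.reindex_bij_betw[OF bij_betw_inv_into[OF h]])
  also have "\<dots> = (\<Sum>j\<in>J. \<Sum>w\<in>W. if w = w0 then ent_term base (c j) else 0)"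
    unfolding lam_def sum.cartesian_product by (intro sum.cong refl) (auto simp: ent_term_def)
  also have "\<dots> = (\<Sum>j\<in>J. ent_term base (c j))"
    using fin(2) w0 by simp
  finally show ?thesis .
qed

section \<open>Partial traces of the measurement chain\<close>

definition step_pair :: "(nat \<Rightarrow> nat \<Rightarrow> nat \<Rightarrow> complex) \<Rightarrow> nat \<Rightarrow> (nat \<Rightarrow> nat) \<Rightarrow> (nat \<Rightarrow> nat) \<Rightarrow> complex" where
  "step_pair U i x y = U i (x (i - 1)) (x i) * cnj (U i (y (i - 1)) (y i))"

lemma unitary_mat_rows:
  assumes "unitary_mat d M" "a < d" "b < d"
  shows "(\<Sum>c<d. M a c * cnj (M b c)) = (if a = b then 1 else 0)"
  using assms unfolding unitary_mat_def by blast

lemma unitary_mat_cols: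
  assumes "unitary_mat d M" "a < d" "b < d"
  shows "(\<Sum>c<d. M c a * cnj (M c b)) = (if a = b then 1 else 0)"
proof -
  have "(\<Sum>c<d. cnj (M c a) * M c b) = (if a = b then 1 else 0)"
    using assms unfolding unitary_mat_def by blast
  then have "cnj (\<Sum>c<d. cnj (M c a) * M c b) = (if a = b then 1 else 0)"
    by simp
  then show ?thesis
    by (simp add: mult.commute)
qed

lemma prod_step_pair_cong:
  assumes "\<And>j. j \<in> {lo..hi} \<Longrightarrow> x j = x' j \<and> y j = y' j"
  shows "(\<Prod>i\<in>{lo+1..hi}. step_pair U i x y) = (\<Prod>i\<in>{lo+1..hi}. step_pair U i x' y')"
proof (rule prod.cong[OF refl])
  fix i assume "i \<in> {lo+1..hi}"
  then have "i - 1 \<in> {lo..hi}" "i \<in> {lo..hi}"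
    by auto
  then show "step_pair U i x y = step_pair U i x' y'"
    unfolding step_pair_def using assms by simp
qed

text \<open>The indicator at index \<open>1\<close> (at index \<open>n\<close> in the next lemma) is what remains of tracing out
  \<open>R\<close> (resp. \<open>Q\<close>), which identifies \<open>x\<^sub>1\<close> with \<open>y\<^sub>1\<close> (resp. \<open>x\<^sub>n\<close> with \<open>y\<^sub>n\<close>).\<close>

lemma sum_chain_left:
  assumes "1 \<le> k" "\<forall>i\<in>{2..k}. unitary_mat d (U i)" "a < d" "b < d"
  shows "(\<Sum>l\<in>{1..<k} \<rightarrow>\<^sub>E {..<d}. (if (l(k := a)) 1 = (l(k := b)) 1 then 1 else 0) *
            (\<Prod>i\<in>{2..k}. step_pair U i (l(k := a)) (l(k := b)))) = (if a = b then 1 else 0)"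
  using assms
proof (induction k arbitrary: a b rule: nat_induct_at_least)
  case base
  then show ?case by simp
next
  case (Suc k)
  have U: "unitary_mat d (U (Suc k))"
    using Suc by auto
  have IH: "(\<Sum>l\<in>{1..<k} \<rightarrow>\<^sub>E {..<d}. \<Prod>i\<in>{2..k}. step_pair U i (l(k := c)) (l(k := c))) = 1"
    if "c < d" for c
    using Suc.IH[of c c] Suc.prems that by (simp add: fun_upd_def)
  have last: "(if (l(k := c, Suc k := a)) 1 = (l(k := c, Suc k := b)) 1 then 1 else 0) *
         (\<Prod>i\<in>{2..Suc k}. step_pair U i (l(k := c, Suc k := a)) (l(k := c, Suc k := b)))
      = (\<Prod>i\<in>{2..k}. step_pair U i (l(k := c)) (l(k := c))) * (U (Suc k) c a * cnj (U (Suc k) c b))"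
    for l c
  proof -
    have two: "{2..k} = {1+1..k}"
      by simp
    have "(\<Prod>i\<in>{2..k}. step_pair U i (l(k := c, Suc k := a)) (l(k := c, Suc k := b)))
        = (\<Prod>i\<in>{2..k}. step_pair U i (l(k := c)) (l(k := c)))"
      unfolding two by (rule prod_step_pair_cong) auto
    moreover have "{2..Suc k} = insert (Suc k) {2..k}"
      using Suc.hyps by auto
    ultimately show ?thesis
      using Suc.hyps by (simp add: step_pair_def mult.commute)
  qed
  have ins: "{1..<Suc k} = insert k {1..<k}"
    using Suc.hyps by auto
  have nin: "k \<notin> {1..<k}"
    by simp
  have "(\<Sum>l\<in>{1..<Suc k} \<rightarrow>\<^sub>E {..<d}. (if (l(Suc k := a)) 1 = (l(Suc k := b)) 1 then 1 else 0) *
            (\<Prod>i\<in>{2..Suc k}. step_pair U i (l(Suc k := a)) (l(Suc k := b))))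
     = (\<Sum>c<d. \<Sum>l\<in>{1..<k} \<rightarrow>\<^sub>E {..<d}. (\<Prod>i\<in>{2..k}. step_pair U i (l(k := c)) (l(k := c))) *
            (U (Suc k) c a * cnj (U (Suc k) c b)))"
    unfolding ins sum_PiE_insert[OF nin] fun_upd_upd fun_upd_twist[of "Suc k" k] last ..
  also have "\<dots> = (\<Sum>c<d. U (Suc k) c a * cnj (U (Suc k) c b))"
    by (intro sum.cong refl) (simp only: sum_distrib_right[symmetric] IH lessThan_iff mult_1)
  also have "\<dots> = (if a = b then 1 else 0)"
    using unitary_mat_cols[OF U Suc.prems(2,3)] .
  finally show ?case .
qed

lemma sum_chain_right:
  assumes "m \<le> n" "\<forall>i\<in>{m+1..n}. unitary_mat d (U i)" "a < d" "b < d"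
  shows "(\<Sum>r\<in>{m<..n} \<rightarrow>\<^sub>E {..<d}. (if (r(m := a)) n = (r(m := b)) n then 1 else 0) *
            (\<Prod>i\<in>{m+1..n}. step_pair U i (r(m := a)) (r(m := b)))) = (if a = b then 1 else 0)"
  using assms
proof (induction n rule: nat_induct_at_least)
  case base
  then show ?case by simp
next
  case (Suc n)
  have U: "unitary_mat d (U (Suc n))"
    using Suc by auto
  have last: "(if (r(Suc n := c, m := a)) (Suc n) = (r(Suc n := c, m := b)) (Suc n) then 1 else 0) *
         (\<Prod>i\<in>{m+1..Suc n}. step_pair U i (r(Suc n := c, m := a)) (r(Suc n := c, m := b)))
      = (\<Prod>i\<in>{m+1..n}. step_pair U i (r(m := a)) (r(m := b))) *
         (U (Suc n) ((r(m := a)) n) c * cnj (U (Suc n) ((r(m := b)) n) c))"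
    for r c
  proof -
    have "(\<Prod>i\<in>{m+1..n}. step_pair U i (r(Suc n := c, m := a)) (r(Suc n := c, m := b)))
        = (\<Prod>i\<in>{m+1..n}. step_pair U i (r(m := a)) (r(m := b)))"
      by (rule prod_step_pair_cong) auto
    moreover have "{m+1..Suc n} = insert (Suc n) {m+1..n}"
      using Suc.hyps by auto
    ultimately show ?thesis
      using Suc.hyps by (simp add: step_pair_def mult.commute)
  qed
  have row: "(\<Sum>c<d. U (Suc n) ((r(m := a)) n) c * cnj (U (Suc n) ((r(m := b)) n) c))
      = (if (r(m := a)) n = (r(m := b)) n then 1 else 0)" if "r \<in> {m<..n} \<rightarrow>\<^sub>E {..<d}" for r
    using that Suc unitary_mat_rows[OF U] by (auto simp: PiE_def Pi_def)
  have ins: "{m<..Suc n} = insert (Suc n) {m<..n}"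
    using Suc.hyps by auto
  have nin: "Suc n \<notin> {m<..n}"
    by simp
  have "(\<Sum>r\<in>{m<..Suc n} \<rightarrow>\<^sub>E {..<d}. (if (r(m := a)) (Suc n) = (r(m := b)) (Suc n) then 1 else 0) *
            (\<Prod>i\<in>{m+1..Suc n}. step_pair U i (r(m := a)) (r(m := b))))
     = (\<Sum>c<d. \<Sum>r\<in>{m<..n} \<rightarrow>\<^sub>E {..<d}. (\<Prod>i\<in>{m+1..n}. step_pair U i (r(m := a)) (r(m := b))) *
         (U (Suc n) ((r(m := a)) n) c * cnj (U (Suc n) ((r(m := b)) n) c)))"
    unfolding ins sum_PiE_insert[OF nin] last ..
  also have "\<dots> = (\<Sum>r\<in>{m<..n} \<rightarrow>\<^sub>E {..<d}. (\<Prod>i\<in>{m+1..n}. step_pair U i (r(m := a)) (r(m := b))) *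
            (\<Sum>c<d. U (Suc n) ((r(m := a)) n) c * cnj (U (Suc n) ((r(m := b)) n) c)))"
    by (subst sum.swap) (simp add: sum_distrib_left)
  also have "\<dots> = (\<Sum>r\<in>{m<..n} \<rightarrow>\<^sub>E {..<d}. (if (r(m := a)) n = (r(m := b)) n then 1 else 0) *
            (\<Prod>i\<in>{m+1..n}. step_pair U i (r(m := a)) (r(m := b))))"
    by (intro sum.cong refl) (simp only: row mult.commute)
  also have "\<dots> = (if a = b then 1 else 0)"
    by (rule Suc.IH) (use Suc.prems in auto)
  finally show ?case .
qed

lemma trace_QR_amp:
  assumes "X n < d" "X 1 < d"
  shows "(\<Sum>q<d. \<Sum>r<d. amp d n U q r X * cnj (amp d n U q r Y)) =
     (if X n = Y n \<and> X 1 = Y 1 then of_real (1 / real d) * (\<Prod>i\<in>{2..n}. step_pair U i X Y) else 0)"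
proof -
  define s :: complex where "s = of_real (1 / sqrt (real d))"
  define P where "P Z = (\<Prod>i\<in>{2..n}. U i (Z (i - 1)) (Z i))" for Z :: "nat \<Rightarrow> nat"
  have "s * cnj s = of_real (1 / real d)"
    unfolding s_def by (simp flip: of_real_mult)
  moreover have "P X * cnj (P Y) = (\<Prod>i\<in>{2..n}. step_pair U i X Y)"
    unfolding P_def step_pair_def by (simp add: prod.distrib cnj_prod)
  moreover have "s * P X * cnj (s * P Y) = (s * cnj s) * (P X * cnj (P Y))"
    by (simp add: ac_simps)
  ultimately have V: "s * P X * cnj (s * P Y) = of_real (1 / real d) * (\<Prod>i\<in>{2..n}. step_pair U i X Y)"
    by simp
  have "amp d n U q r X * cnj (amp d n U q r Y) =
      (if q = X n then if r = X 1 then if X n = Y n \<and> X 1 = Y 1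
        then of_real (1 / real d) * (\<Prod>i\<in>{2..n}. step_pair U i X Y) else 0 else 0 else 0)"
    for q r
    unfolding amp_def s_def[symmetric] P_def[symmetric] using V by auto
  moreover have "(\<Sum>q<d. \<Sum>r<d. if q = x then if r = y then W else 0 else 0) = W"
    if "x < d" "y < d" for x y and W :: complex
  proof -
    have "(\<Sum>r<d. if q = x then if r = y then W else 0 else 0) = (if q = x then W else 0)" for q
      using that by (cases "q = x") simp_all
    then show ?thesis
      using that by simp
  qed
  ultimately show ?thesis
    using assms by simp
qed

lemma prod_step_pair_override_split:
  assumes km: "1 \<le> k" "k \<le> m" "m \<le> n" and K: "K \<subseteq> {k..m}" "k \<in> K" "m \<in> K"
  shows "(\<Prod>i\<in>{2..n}. step_pair U i (override_on z a K) (override_on z b K)) =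
    (\<Prod>i\<in>{2..k}. step_pair U i ((restrict z {1..<k})(k := a k)) ((restrict z {1..<k})(k := b k))) *
    (\<Prod>i\<in>{k+1..m}. step_pair U i (override_on (restrict z ({k<..<m} - K)) a K)
      (override_on (restrict z ({k<..<m} - K)) b K)) *
    (\<Prod>i\<in>{m+1..n}. step_pair U i ((restrict z {m<..n})(m := a m)) ((restrict z {m<..n})(m := b m)))"
proof -
  let ?f = "\<lambda>i. step_pair U i (override_on z a K) (override_on z b K)"
  have two: "{2..k} = {1+1..k}"
    by simp
  have left: "prod ?f {2..k} =
      (\<Prod>i\<in>{2..k}. step_pair U i ((restrict z {1..<k})(k := a k)) ((restrict z {1..<k})(k := b k)))"
    unfolding two using K by (intro prod_step_pair_cong) (auto simp: override_on_def)
  have mid: "prod ?f {k+1..m} = (\<Prod>i\<in>{k+1..m}. step_pair U i (override_on (restrict z ({k<..<m} - K)) a K)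
      (override_on (restrict z ({k<..<m} - K)) b K))"
    using K by (intro prod_step_pair_cong) (auto simp: override_on_def)
  have right: "prod ?f {m+1..n} =
      (\<Prod>i\<in>{m+1..n}. step_pair U i ((restrict z {m<..n})(m := a m)) ((restrict z {m<..n})(m := b m)))"
    using K by (intro prod_step_pair_cong) (auto simp: override_on_def)
  have split: "{2..n} = {2..k} \<union> ({k+1..m} \<union> {m+1..n})"
    using km by auto
  have disj: "{2..k} \<inter> ({k+1..m} \<union> {m+1..n}) = {}" "{k+1..m} \<inter> {m+1..n} = {}"
    using km by auto
  have "prod ?f {2..n} = prod ?f {2..k} * prod ?f ({k+1..m} \<union> {m+1..n})"
    unfolding split by (rule prod.union_disjoint) (use disj in auto)
  also have "prod ?f ({k+1..m} \<union> {m+1..n}) = prod ?f {k+1..m} * prod ?f {m+1..n}"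
    by (rule prod.union_disjoint) (use disj in auto)
  finally show ?thesis
    by (simp only: left mid right mult.assoc)
qed

lemma reduced_eq_sum_override:
  assumes "1 \<le> n" "a \<in> K \<rightarrow>\<^sub>E {..<d}"
  shows "reduced d n U K a b = (\<Sum>z\<in>({1..n} - K) \<rightarrow>\<^sub>E {..<d}.
    if override_on z a K n = override_on z b K n \<and> override_on z a K 1 = override_on z b K 1
    then of_real (1 / real d) * (\<Prod>i\<in>{2..n}. step_pair U i (override_on z a K) (override_on z b K))
    else 0)"
proof -
  have "reduced d n U K a b = (\<Sum>z\<in>({1..n} - K) \<rightarrow>\<^sub>E {..<d}. \<Sum>q<d. \<Sum>r<d.
      amp d n U q r (override_on z a K) * cnj (amp d n U q r (override_on z b K)))"
    unfolding reduced_def override_on_def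
    by (subst sum.swap, rule sum.cong, simp, subst sum.swap, simp)
  also have "\<dots> = (\<Sum>z\<in>({1..n} - K) \<rightarrow>\<^sub>E {..<d}.
    if override_on z a K n = override_on z b K n \<and> override_on z a K 1 = override_on z b K 1
    then of_real (1 / real d) * (\<Prod>i\<in>{2..n}. step_pair U i (override_on z a K) (override_on z b K))
    else 0)"
  proof (intro sum.cong refl trace_QR_amp)
    fix z assume "z \<in> ({1..n} - K) \<rightarrow>\<^sub>E {..<d}"
    then show "override_on z a K n < d" "override_on z a K 1 < d"
      using assms by (auto simp: override_on_def PiE_def Pi_def)
  qed
  finally show ?thesis .
qed

lemma reduced_between:
  assumes U: "\<forall>i\<in>{2..n}. unitary_mat d (U i)"
    and km: "1 \<le> k" "k \<le> m" "m \<le> n" and K: "K \<subseteq> {k..m}" "k \<in> K" "m \<in> K"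
    and a: "a \<in> K \<rightarrow>\<^sub>E {..<d}" and b: "b \<in> K \<rightarrow>\<^sub>E {..<d}"
  shows "reduced d n U K a b =
    (if a k = b k \<and> a m = b m then of_real (1 / real d) *
       (\<Sum>w\<in>({k<..<m} - K) \<rightarrow>\<^sub>E {..<d}. \<Prod>i\<in>{k+1..m}. step_pair U i (override_on w a K) (override_on w b K))
     else 0)"
proof -
  define L where "L = {1..<k}"
  define M where "M = {k<..<m} - K"
  define R where "R = {m<..n}"
  define left where "left l = (if (l(k := a k)) 1 = (l(k := b k)) 1 then 1 else 0) *
    (\<Prod>i\<in>{2..k}. step_pair U i (l(k := a k)) (l(k := b k)))" for l
  define mid where "mid w = (\<Prod>i\<in>{k+1..m}. step_pair U i (override_on w a K) (override_on w b K))" for w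
  define right where "right r = (if (r(m := a m)) n = (r(m := b m)) n then 1 else 0) *
    (\<Prod>i\<in>{m+1..n}. step_pair U i (r(m := a m)) (r(m := b m)))" for r
  have ends: "a k < d" "a m < d" "b k < d" "b m < d"
    using a b K by auto
  have factor: "(if override_on z a K n = override_on z b K n \<and> override_on z a K 1 = override_on z b K 1
      then of_real (1 / real d) * (\<Prod>i\<in>{2..n}. step_pair U i (override_on z a K) (override_on z b K))
      else 0) = of_real (1 / real d) * left (restrict z L) * (mid (restrict z M) * right (restrict z R))" for z
  proof -
    have "override_on z a K 1 = ((restrict z L)(k := a k)) 1"
      "override_on z b K 1 = ((restrict z L)(k := b k)) 1"
      "override_on z a K n = ((restrict z R)(m := a m)) n"
      "override_on z b K n = ((restrict z R)(m := b m)) n"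
      using km K by (auto simp: L_def R_def override_on_def)
    then show ?thesis
      unfolding prod_step_pair_override_split[OF km K] left_def mid_def right_def L_def M_def R_def by auto
  qed
  define midright where "midright y = mid (restrict y M) * right (restrict y R)" for y
  have dom: "{1..n} - K = L \<union> (M \<union> R)" "L \<inter> (M \<union> R) = {}" "M \<inter> R = {}"
    using km K by (auto simp: L_def M_def R_def le_less)
  have "reduced d n U K a b = (\<Sum>z\<in>(L \<union> (M \<union> R)) \<rightarrow>\<^sub>E {..<d}.
      of_real (1 / real d) * left (restrict z L) * (mid (restrict z M) * right (restrict z R)))"
    using km by (simp only: reduced_eq_sum_override[OF _ a] factor dom(1))
  also have "\<dots> = of_real (1 / real d) *
      (\<Sum>z\<in>(L \<union> (M \<union> R)) \<rightarrow>\<^sub>E {..<d}. left (restrict z L) * midright (restrict z (M \<union> R)))"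
    by (simp add: sum_distrib_left midright_def mult.assoc Int_absorb1)
  also have "\<dots> = of_real (1 / real d) * (\<Sum>l\<in>L \<rightarrow>\<^sub>E {..<d}. left l) *
      ((\<Sum>w\<in>M \<rightarrow>\<^sub>E {..<d}. mid w) * (\<Sum>r\<in>R \<rightarrow>\<^sub>E {..<d}. right r))"
    unfolding sum_PiE_Un_mult[OF dom(2)]
    by (simp add: midright_def sum_PiE_Un_mult[OF dom(3)] mult.assoc)
  also have "(\<Sum>l\<in>L \<rightarrow>\<^sub>E {..<d}. left l) = (if a k = b k then 1 else 0)"
    unfolding L_def left_def using sum_chain_left[of k d U "a k" "b k"] U km ends by auto
  also have "(\<Sum>r\<in>R \<rightarrow>\<^sub>E {..<d}. right r) = (if a m = b m then 1 else 0)"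
    unfolding R_def right_def using sum_chain_right[of m n d U "a m" "b m"] U km ends by auto
  finally show ?thesis
    unfolding M_def mid_def by simp
qed

section \<open>The block of ancillae between \<open>A\<^sub>k\<close> and \<open>A\<^sub>m\<close>\<close>

definition block_amp :: "(nat \<Rightarrow> nat \<Rightarrow> nat \<Rightarrow> complex) \<Rightarrow> nat \<Rightarrow> nat \<Rightarrow> nat \<Rightarrow> nat \<Rightarrow> (nat \<Rightarrow> nat) \<Rightarrow> complex" where
  "block_amp U k m x y w = (\<Prod>i\<in>{k+1..m}. U i ((w(k := x, m := y)) (i - 1)) ((w(k := x, m := y)) i))"

definition block_weight :: "nat \<Rightarrow> (nat \<Rightarrow> nat \<Rightarrow> nat \<Rightarrow> complex) \<Rightarrow> nat \<Rightarrow> nat \<Rightarrow> nat \<Rightarrow> nat \<Rightarrow> real" where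
  "block_weight d U k m x y = (\<Sum>w\<in>{k<..<m} \<rightarrow>\<^sub>E {..<d}. (cmod (block_amp U k m x y w))\<^sup>2)"

text \<open>The normalised state \<open>|\<phi>\<^sub>x\<^sub>y\<rangle>\<close> of the inner ancillae; when \<open>p\<^sub>x\<^sub>y = 0\<close> it does not enter the
  reduced state and any unit vector will do.\<close>

definition block_state :: "nat \<Rightarrow> (nat \<Rightarrow> nat \<Rightarrow> nat \<Rightarrow> complex) \<Rightarrow> nat \<Rightarrow> nat \<Rightarrow> nat \<Rightarrow> nat \<Rightarrow> (nat \<Rightarrow> nat) \<Rightarrow> complex" where
  "block_state d U k m x y w =
     (if block_weight d U k m x y = 0 then (if w = (\<lambda>i\<in>{k<..<m}. 0) then 1 else 0)
      else block_amp U k m x y w / of_real (sqrt (block_weight d U k m x y)))"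

lemma block_weight_eq_sum_prod:
  "block_weight d U k m x y = (\<Sum>z\<in>{k<..<m} \<rightarrow>\<^sub>E {..<d}.
     \<Prod>i\<in>{k+1..m}. (cmod (U i ((z(k := x, m := y)) (i - 1)) ((z(k := x, m := y)) i)))\<^sup>2)"
  unfolding block_weight_def block_amp_def by (simp add: prod_norm[symmetric] prod_power_distrib)

lemma block_weight_nonneg: "block_weight d U k m x y \<ge> 0"
  unfolding block_weight_def by (simp add: sum_nonneg)

lemma block_state_unit:
  assumes "d > 0"
  shows "(\<Sum>w\<in>{k<..<m} \<rightarrow>\<^sub>E {..<d}. (cmod (block_state d U k m x y w))\<^sup>2) = 1"
proof (cases "block_weight d U k m x y = 0")
  case True
  have "(\<lambda>i\<in>{k<..<m}. 0) \<in> {k<..<m} \<rightarrow>\<^sub>E {..<d}"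
    using assms by simp
  then show ?thesis
    using True by (simp add: block_state_def finite_PiE if_distrib[of "\<lambda>t. (cmod t)\<^sup>2"] cong: if_cong)
next
  case False
  then have "block_weight d U k m x y > 0"
    using block_weight_nonneg[of d U k m x y] by simp
  then show ?thesis
    unfolding block_state_def using False
    by (simp add: norm_divide power_divide sum_divide_distrib[symmetric] block_weight_def[symmetric])
qed

lemma block_amp_eq_state:
  assumes "w \<in> {k<..<m} \<rightarrow>\<^sub>E {..<d}"
  shows "block_amp U k m x y w = of_real (sqrt (block_weight d U k m x y)) * block_state d U k m x y w"
proof (cases "block_weight d U k m x y = 0")
  case True
  then have "\<forall>w\<in>{k<..<m} \<rightarrow>\<^sub>E {..<d}. (cmod (block_amp U k m x y w))\<^sup>2 = 0"
    unfolding block_weight_def by (subst (asm) sum_nonneg_eq_0_iff) (auto simp: finite_PiE)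
  then show ?thesis
    using True assms by simp
qed (simp add: block_state_def)

lemma prod_step_pair_block_amp:
  "(\<Prod>i\<in>{k+1..m}. step_pair U i x y) =
    block_amp U k m (x k) (x m) (restrict x {k<..<m}) * cnj (block_amp U k m (y k) (y m) (restrict y {k<..<m}))"
proof -
  have "(\<Prod>i\<in>{k+1..m}. step_pair U i x y) =
      (\<Prod>i\<in>{k+1..m}. step_pair U i ((restrict x {k<..<m})(k := x k, m := x m)) ((restrict y {k<..<m})(k := y k, m := y m)))"
    by (rule prod_step_pair_cong) auto
  then show ?thesis
    unfolding block_amp_def step_pair_def by (simp add: prod.distrib cnj_prod)
qed

lemma reduced_block:
  assumes U: "\<forall>i\<in>{2..n}. unitary_mat d (U i)" and km: "1 \<le> k" "k < m" "m \<le> n"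
    and a: "a \<in> {k..m} \<rightarrow>\<^sub>E {..<d}" and b: "b \<in> {k..m} \<rightarrow>\<^sub>E {..<d}"
  shows "reduced d n U {k..m} a b =
    (if a k = b k \<and> a m = b m
     then of_real (1 / real d) * of_real (block_weight d U k m (a k) (a m)) *
          block_state d U k m (a k) (a m) (restrict a {k<..<m}) *
          cnj (block_state d U k m (a k) (a m) (restrict b {k<..<m}))
     else 0)"
proof -
  have ra: "restrict a {k<..<m} \<in> {k<..<m} \<rightarrow>\<^sub>E {..<d}" "restrict b {k<..<m} \<in> {k<..<m} \<rightarrow>\<^sub>E {..<d}"
    using a b by auto
  have empty: "{k<..<m} - {k..m} = {}"
    by auto
  have "reduced d n U {k..m} a b = (if a k = b k \<and> a m = b m then of_real (1 / real d) *
      (\<Prod>i\<in>{k+1..m}. step_pair U i (override_on (\<lambda>_. undefined) a {k..m}) (override_on (\<lambda>_. undefined) b {k..m})) else 0)"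
    using reduced_between[OF U km(1) less_imp_le[OF km(2)] km(3) _ _ _ a b] km unfolding empty by simp
  also have "(\<Prod>i\<in>{k+1..m}. step_pair U i (override_on (\<lambda>_. undefined) a {k..m}) (override_on (\<lambda>_. undefined) b {k..m})) =
      block_amp U k m (a k) (a m) (restrict a {k<..<m}) * cnj (block_amp U k m (b k) (b m) (restrict b {k<..<m}))"
  proof -
    have "override_on (\<lambda>_. undefined) a {k..m} = a" "override_on (\<lambda>_. undefined) b {k..m} = b"
      using a b by (auto simp: override_on_def PiE_def extensional_def fun_eq_iff)
    then show ?thesis
      by (simp only: prod_step_pair_block_amp)
  qed
  finally show ?thesis
    using block_amp_eq_state[OF ra(1)] block_amp_eq_state[OF ra(2)] block_weight_nonneg
    by (auto simp flip: of_real_mult)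
qed

lemma reduced_ends:
  assumes U: "\<forall>i\<in>{2..n}. unitary_mat d (U i)" and km: "1 \<le> k" "k < m" "m \<le> n"
    and a: "a \<in> {k, m} \<rightarrow>\<^sub>E {..<d}" and b: "b \<in> {k, m} \<rightarrow>\<^sub>E {..<d}"
  shows "reduced d n U {k, m} a b = (if a = b then of_real (block_weight d U k m (a k) (a m) / real d) else 0)"
proof -
  have mid: "{k<..<m} - {k, m} = {k<..<m}"
    by auto
  have ab: "(a k = b k \<and> a m = b m) \<longleftrightarrow> a = b"
    using PiE_doubleton_eq_iff[OF a b] by simp
  have "(\<Prod>i\<in>{k+1..m}. step_pair U i (override_on w a {k, m}) (override_on w a {k, m})) =
      of_real ((cmod (block_amp U k m (a k) (a m) w))\<^sup>2)" if "w \<in> {k<..<m} \<rightarrow>\<^sub>E {..<d}" for w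
  proof -
    have "restrict (override_on w a {k, m}) {k<..<m} = w"
      using that by (auto simp: override_on_def PiE_def extensional_def fun_eq_iff)
    then show ?thesis
      unfolding prod_step_pair_block_amp complex_norm_square by simp
  qed
  then have "(\<Sum>w\<in>{k<..<m} \<rightarrow>\<^sub>E {..<d}. \<Prod>i\<in>{k+1..m}. step_pair U i (override_on w a {k, m}) (override_on w a {k, m}))
      = of_real (block_weight d U k m (a k) (a m))"
    unfolding block_weight_def of_real_sum by (rule sum.cong[OF refl])
  then show ?thesis
    using reduced_between[OF U km(1) less_imp_le[OF km(2)] km(3) _ _ _ a b] km
    unfolding mid ab by (auto simp: divide_inverse mult.commute)
qed

lemma reduced_block_override:
  assumes U: "\<forall>i\<in>{2..n}. unitary_mat d (U i)" and km: "1 \<le> k" "k < m" "m \<le> n"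
    and j: "j \<in> {k, m} \<rightarrow>\<^sub>E {..<d}" "j' \<in> {k, m} \<rightarrow>\<^sub>E {..<d}"
    and w: "w \<in> {k<..<m} \<rightarrow>\<^sub>E {..<d}" "w' \<in> {k<..<m} \<rightarrow>\<^sub>E {..<d}"
  shows "reduced d n U {k..m} (override_on w j {k, m}) (override_on w' j' {k, m}) =
    (if j = j' then of_real (block_weight d U k m (j k) (j m) / real d) *
       block_state d U k m (j k) (j m) w * cnj (block_state d U k m (j k) (j m) w')
     else 0)"
proof -
  have "override_on w j {k, m} \<in> {k..m} \<rightarrow>\<^sub>E {..<d}" "override_on w' j' {k, m} \<in> {k..m} \<rightarrow>\<^sub>E {..<d}"
    using j w km by (auto simp: override_on_def PiE_def extensional_def Pi_def)
  moreover have "restrict (override_on w j {k, m}) {k<..<m} = w" "restrict (override_on w' j' {k, m}) {k<..<m} = w'"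
    using w by (auto simp: override_on_def PiE_def extensional_def fun_eq_iff)
  moreover have "j = j' \<longleftrightarrow> j k = j' k \<and> j m = j' m"
    using PiE_doubleton_eq_iff[OF j] .
  moreover have "of_real (1 / real d) * of_real (block_weight d U k m (j k) (j m)) =
      (of_real (block_weight d U k m (j k) (j m) / real d) :: complex)"
    by simp
  ultimately show ?thesis
    using km by (simp add: reduced_block[OF U km])
qed

lemma vn_entropy_reduced_block:
  assumes U: "\<forall>i\<in>{2..n}. unitary_mat d (U i)" and km: "1 \<le> k" "k < m" "m \<le> n" and d: "d > 0"
  shows "vn_entropy (real d) ({k..m} \<rightarrow>\<^sub>E {..<d}) (reduced d n U {k..m}) =
    - (\<Sum>j\<in>{k, m} \<rightarrow>\<^sub>E {..<d}. ent_term (real d) (block_weight d U k m (j k) (j m) / real d))"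
proof (rule vn_entropy_cq[of "\<lambda>p. override_on (snd p) (fst p) {k, m}" "{k, m} \<rightarrow>\<^sub>E {..<d}"
      "{k<..<m} \<rightarrow>\<^sub>E {..<d}" "{k..m} \<rightarrow>\<^sub>E {..<d}" "\<lambda>j. block_state d U k m (j k) (j m)"
      "reduced d n U {k..m}" "\<lambda>j. block_weight d U k m (j k) (j m) / real d" "real d"])
  have "{k, m} \<union> {k<..<m} = {k..m}" "{k, m} \<inter> {k<..<m} = {}"
    using km by auto
  then show "bij_betw (\<lambda>p. override_on (snd p) (fst p) {k, m})
      (({k, m} \<rightarrow>\<^sub>E {..<d}) \<times> ({k<..<m} \<rightarrow>\<^sub>E {..<d})) ({k..m} \<rightarrow>\<^sub>E {..<d})"
    using bij_betw_override_on_PiE[of "{k, m}" "{k<..<m}"] by simp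
  show "{k<..<m} \<rightarrow>\<^sub>E {..<d} \<noteq> {}"
    using d by (auto simp: PiE_eq_empty_iff)
  show "\<forall>j\<in>{k, m} \<rightarrow>\<^sub>E {..<d}. (\<Sum>w\<in>{k<..<m} \<rightarrow>\<^sub>E {..<d}. (cmod (block_state d U k m (j k) (j m) w))\<^sup>2) = 1"
    using block_state_unit[OF d] by blast
  show "\<forall>p\<in>({k, m} \<rightarrow>\<^sub>E {..<d}) \<times> ({k<..<m} \<rightarrow>\<^sub>E {..<d}). \<forall>q\<in>({k, m} \<rightarrow>\<^sub>E {..<d}) \<times> ({k<..<m} \<rightarrow>\<^sub>E {..<d}).
    reduced d n U {k..m} (override_on (snd p) (fst p) {k, m}) (override_on (snd q) (fst q) {k, m}) =
    (if fst p = fst q then of_real (block_weight d U k m (fst p k) (fst p m) / real d) *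
       block_state d U k m (fst p k) (fst p m) (snd p) * cnj (block_state d U k m (fst p k) (fst p m) (snd q))
     else 0)"
    by (intro ballI reduced_block_override[OF U km]) (auto simp: mem_Times_iff)
  show "finite ({k, m} \<rightarrow>\<^sub>E {..<d})" "finite ({k<..<m} \<rightarrow>\<^sub>E {..<d})"
    by (simp_all add: finite_PiE)
qed

lemma vn_entropy_reduced_ends:
  assumes U: "\<forall>i\<in>{2..n}. unitary_mat d (U i)" and km: "1 \<le> k" "k < m" "m \<le> n"
  shows "vn_entropy (real d) ({k, m} \<rightarrow>\<^sub>E {..<d}) (reduced d n U {k, m}) =
    - (\<Sum>j\<in>{k, m} \<rightarrow>\<^sub>E {..<d}. ent_term (real d) (block_weight d U k m (j k) (j m) / real d))"
proof (rule vn_entropy_diagonal)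
  show "\<forall>a\<in>{k, m} \<rightarrow>\<^sub>E {..<d}. \<forall>b\<in>{k, m} \<rightarrow>\<^sub>E {..<d}. reduced d n U {k, m} a b =
      (if a = b then of_real (block_weight d U k m (a k) (a m) / real d) else 0)"
    using reduced_ends[OF U km] by blast
qed (simp add: finite_PiE)

theorem theorem2:
  fixes d n k m :: nat and U :: "nat \<Rightarrow> nat \<Rightarrow> nat \<Rightarrow> complex"
  assumes "d \<ge> 2" and "n \<ge> 3"
    and "\<forall>i\<in>{2..n}. unitary_mat d (U i)"
    and "1 \<le> k" and "k < m" and "m \<le> n" and "m - k \<ge> 2"
  shows "(\<exists>\<phi> :: nat \<Rightarrow> nat \<Rightarrow> (nat \<Rightarrow> nat) \<Rightarrow> complex.
            (\<forall>x<d. \<forall>y<d. (\<Sum>w\<in>{k<..<m} \<rightarrow>\<^sub>E {..<d}. (cmod (\<phi> x y w))\<^sup>2) = 1) \<and>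
            (\<forall>a\<in>{k..m} \<rightarrow>\<^sub>E {..<d}. \<forall>b\<in>{k..m} \<rightarrow>\<^sub>E {..<d}.
               reduced d n U {k..m} a b =
                 (if a k = b k \<and> a m = b m
                  then complex_of_real (1 / real d) *
                       complex_of_real
                         (\<Sum>z\<in>{k<..<m} \<rightarrow>\<^sub>E {..<d}.
                            \<Prod>i\<in>{k+1..m}. (cmod (U i ((z(k := a k, m := a m)) (i - 1))
                                                    ((z(k := a k, m := a m)) i)))\<^sup>2) *
                       \<phi> (a k) (a m) (restrict a {k<..<m}) *
                       cnj (\<phi> (a k) (a m) (restrict b {k<..<m}))
                  else 0))) \<and>
         vn_entropy (real d) ({k..m} \<rightarrow>\<^sub>E {..<d}) (reduced d n U {k..m}) =
         vn_entropy (real d) ({k, m} \<rightarrow>\<^sub>E {..<d}) (reduced d n U {k, m})"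
proof -
  have d: "d > 0"
    using assms(1) by simp
  note U = assms(3) and km = assms(4-6)
  have "\<exists>\<phi> :: nat \<Rightarrow> nat \<Rightarrow> (nat \<Rightarrow> nat) \<Rightarrow> complex.
      (\<forall>x<d. \<forall>y<d. (\<Sum>w\<in>{k<..<m} \<rightarrow>\<^sub>E {..<d}. (cmod (\<phi> x y w))\<^sup>2) = 1) \<and>
      (\<forall>a\<in>{k..m} \<rightarrow>\<^sub>E {..<d}. \<forall>b\<in>{k..m} \<rightarrow>\<^sub>E {..<d}.
         reduced d n U {k..m} a b =
           (if a k = b k \<and> a m = b m
            then of_real (1 / real d) * of_real (block_weight d U k m (a k) (a m)) *
                 \<phi> (a k) (a m) (restrict a {k<..<m}) * cnj (\<phi> (a k) (a m) (restrict b {k<..<m}))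
            else 0))"
    using block_state_unit[OF d] reduced_block[OF U km] by blast
  moreover have "vn_entropy (real d) ({k..m} \<rightarrow>\<^sub>E {..<d}) (reduced d n U {k..m}) =
      vn_entropy (real d) ({k, m} \<rightarrow>\<^sub>E {..<d}) (reduced d n U {k, m})"
    using vn_entropy_reduced_block[OF U km d] vn_entropy_reduced_ends[OF U km] by simp
  ultimately show ?thesis
    unfolding block_weight_eq_sum_prod by blast
qed

end
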